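(* If $0\leq\alpha<1$ and $\beta\geq2$, then $T_{\alpha,\beta}$ is transitive.
   Context: $T_{\alpha,\beta}\colon[0,1]\to[0,1]$ is given by $T_{\alpha,\beta}(x)=\beta x+\alpha-\lfloor\beta x+\alpha\rfloor$ for $x\in[0,1)$ and $T_{\alpha,\beta}(1)=\lim_{x\nearrow1}T_{\alpha,\beta}(x)$. A map $T\colon[0,1]\to[0,1]$ is transitive if there is $x\in[0,1]$ whose forward orbit $\{T^n(x)\colon n\geq0\}$ is dense in $[0,1]$. *)

theory Defs
  imports "HOL-Analysis.Analysis"
begin

definition T_ab :: "real \<Rightarrow> real \<Rightarrow> real \<Rightarrow> real" where
  "T_ab \<alpha> \<beta> x =
     (if x = 1 then Lim (at_left 1) (\<lambda>y. \<beta> * y + \<alpha> - of_int \<lfloor>\<beta> * y + \<alpha>\<rfloor>)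
      else \<beta> * x + \<alpha> - of_int \<lfloor>\<beta> * x + \<alpha>\<rfloor>)"

definition transitive_on_unit :: "(real \<Rightarrow> real) \<Rightarrow> bool" where
  "transitive_on_unit T \<longleftrightarrow>
     (\<exists>x\<in>{0..1}. {0..1} \<subseteq> closure {(T ^^ n) x | n. True})"

end

(*
  On [0,1[ the map is x \<mapsto> frac (\<beta> x + \<alpha>), so on an interval avoiding the discontinuities
  of T^n the iterate T^n is affine of slope \<beta>^n.  Follow such an affine branch inside a given
  interval J: applying T once more, either the image wraps around the whole circle, so that an
  iterate maps a subinterval of J onto [0,1[, or the image meets at most two unit cells and the
  larger part gives a new branch whose image is at least \<beta>/2 times as long.  Images of branches
  have length at most 1, so for \<beta> > 2 the first alternative must occur; for \<beta> = 2 it is read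
  off from T^n x = frac (2^n x + (2^n - 1) \<alpha>).  Thus some iterate maps a subinterval of every
  interval into every other interval.  So the points having a neighbourhood mapped by some
  iterate into a given rational interval form open dense sets, and a point in all of them,
  which exists by Baire's theorem, has a dense orbit.
*)
theory Submission
  imports Defs
begin

lemma T_ab_eq_frac: "x \<noteq> 1 \<Longrightarrow> T_ab \<alpha> \<beta> x = frac (\<beta> * x + \<alpha>)"
  by (simp add: T_ab_def frac_def)

lemma T_ab_iterate_in_unit: "x \<in> {0..<1} \<Longrightarrow> (T_ab \<alpha> \<beta> ^^ n) x \<in> {0..<1}"
  by (induction n) (auto simp: T_ab_eq_frac frac_lt_1)

lemma T_ab_2_iterate:
  assumes "x \<in> {0..<1}"
  shows "(T_ab \<alpha> 2 ^^ n) x = frac (2^n * x + (2^n - 1) * \<alpha>)"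
proof (induction n)
  case 0
  show ?case
    using assms by (simp add: frac_eq)
next
  case (Suc n)
  define y where "y = 2^n * x + (2^n - 1) * \<alpha>"
  have "(T_ab \<alpha> 2 ^^ Suc n) x = frac (2 * frac y + \<alpha>)"
    using Suc T_ab_iterate_in_unit[OF assms, where \<alpha>=\<alpha> and \<beta>=2 and n=n]
    by (simp add: T_ab_eq_frac y_def)
  also have "2 * frac y + \<alpha> = (2 * y + \<alpha>) + of_int (- 2 * \<lfloor>y\<rfloor>)"
    by (simp add: frac_def algebra_simps)
  also have "frac \<dots> = frac (2 * y + \<alpha>)"
    by (rule frac_add_of_int_right)
  also have "2 * y + \<alpha> = 2^Suc n * x + (2^Suc n - 1) * \<alpha>"
    by (simp add: y_def algebra_simps)
  finally show ?case .
qed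

lemma frac_affine_restrict_to_cell:
  fixes f :: "real \<Rightarrow> real"
  assumes "L > 0" and f: "\<forall>x\<in>{p<..<q}. f x = frac (c + L * (x - p))"
    and "c \<le> y\<^sub>1" "y\<^sub>1 < y\<^sub>2" "y\<^sub>2 \<le> c + L * (q - p)"
    and cell: "\<forall>y\<in>{y\<^sub>1<..<y\<^sub>2}. \<lfloor>y\<rfloor> = k"
  obtains p' q' where "p \<le> p'" "p' < q'" "q' \<le> q" "L * (q' - p') = y\<^sub>2 - y\<^sub>1"
    "\<forall>x\<in>{p'<..<q'}. f x = y\<^sub>1 - of_int k + L * (x - p')"
proof
  define p' where "p' = p + (y\<^sub>1 - c) / L"
  define q' where "q' = p + (y\<^sub>2 - c) / L"
  show "p \<le> p'" "p' < q'" "q' \<le> q" "L * (q' - p') = y\<^sub>2 - y\<^sub>1"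
    using assms by (auto simp: p'_def q'_def field_simps)
  show "\<forall>x\<in>{p'<..<q'}. f x = y\<^sub>1 - of_int k + L * (x - p')"
  proof
    fix x assume x: "x \<in> {p'<..<q'}"
    have lift: "c + L * (x - p) = y\<^sub>1 + L * (x - p')"
      using \<open>L > 0\<close> by (simp add: p'_def field_simps)
    have "c + L * (x - p) \<in> {y\<^sub>1<..<y\<^sub>2}"
      using x \<open>L > 0\<close> by (auto simp: p'_def q'_def field_simps)
    moreover have "x \<in> {p<..<q}"
      using x \<open>p \<le> p'\<close> \<open>q' \<le> q\<close> by auto
    ultimately show "f x = y\<^sub>1 - of_int k + L * (x - p')"
      using f cell lift by (simp add: frac_def)
  qed
qed

lemma interval_contains_cell_or_half_in_cell:
  fixes u v :: real
  assumes "u < v"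
  obtains (cell) k :: int where "u \<le> of_int k" "of_int k + 1 \<le> v"
    | (half) u' v' k where "u \<le> u'" "u' < v'" "v' \<le> v" "v - u \<le> 2 * (v' - u')"
        "\<forall>y\<in>{u'<..<v'}. \<lfloor>y\<rfloor> = k"
proof -
  define k where "k = \<lfloor>u\<rfloor> + 1"
  have k: "u < of_int k" "of_int k - 1 \<le> u"
    unfolding k_def by linarith+
  have below_k: "\<forall>y\<in>{u<..<min v (of_int k)}. \<lfloor>y\<rfloor> = k - 1"
    using k by (auto simp: floor_eq_iff)
  consider "v \<le> of_int k" | "of_int k + 1 \<le> v" | "of_int k < v" "v < of_int k + 1"
    by linarith
  then show thesis
  proof cases
    case 1
    then show thesis
      using half[of u v "k - 1"] below_k \<open>u < v\<close> by auto
  next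
    case 2
    then show thesis
      using cell[of k] k by simp
  next
    case 3
    have above_k: "\<forall>y\<in>{of_int k<..<v}. \<lfloor>y\<rfloor> = k"
      using 3 by (auto simp: floor_eq_iff)
    show thesis
    proof (cases "v - u \<le> 2 * (of_int k - u)")
      case True
      then show thesis
        using half[of u "of_int k" "k - 1"] below_k k 3 by auto
    next
      case False
      then show thesis
        using half[of "of_int k" v k] above_k k 3 by auto
    qed
  qed
qed

text \<open>Since the lift \<open>c + \<beta>\<^sup>n (x - p)\<close> covers a whole cell \<open>[k, k + 1]\<close>,
  \<open>T\<^sup>n\<close> maps \<open>]p, q[\<close> onto \<open>[0, 1[\<close>.\<close>
definition T_ab_covers_unit :: "real \<Rightarrow> real \<Rightarrow> nat \<Rightarrow> real \<Rightarrow> real \<Rightarrow> bool" where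
  "T_ab_covers_unit \<alpha> \<beta> n p q \<longleftrightarrow> p < q \<and>
     (\<exists>c k. (\<forall>x\<in>{p<..<q}. (T_ab \<alpha> \<beta> ^^ n) x = frac (c + \<beta>^n * (x - p))) \<and>
            c \<le> of_int k \<and> of_int k + 1 \<le> c + \<beta>^n * (q - p))"

lemma T_ab_covers_unit_hits:
  assumes "T_ab_covers_unit \<alpha> \<beta> n p q" "\<beta> > 0" "0 \<le> r" "r < s" "s \<le> 1"
  obtains p' q' where "p \<le> p'" "p' < q'" "q' \<le> q" "(T_ab \<alpha> \<beta> ^^ n) ` {p'<..<q'} \<subseteq> {r<..<s}"
proof -
  obtain c k where f: "\<forall>x\<in>{p<..<q}. (T_ab \<alpha> \<beta> ^^ n) x = frac (c + \<beta>^n * (x - p))"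
    and k: "c \<le> of_int k" "of_int k + 1 \<le> c + \<beta>^n * (q - p)"
    using assms(1) unfolding T_ab_covers_unit_def by blast
  have cell: "\<forall>y\<in>{of_int k + r<..<of_int k + s}. \<lfloor>y\<rfloor> = k"
    using assms by (auto simp: floor_eq_iff)
  obtain p' q' where pq': "p \<le> p'" "p' < q'" "q' \<le> q" "\<beta>^n * (q' - p') = s - r"
    and f': "\<forall>x\<in>{p'<..<q'}. (T_ab \<alpha> \<beta> ^^ n) x = r + \<beta>^n * (x - p')"
    using frac_affine_restrict_to_cell[OF _ f _ _ _ cell] assms k by auto
  have "(T_ab \<alpha> \<beta> ^^ n) x \<in> {r<..<s}" if "x \<in> {p'<..<q'}" for x
  proof -
    have "\<beta>^n * (x - p') < \<beta>^n * (q' - p')"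
      using that \<open>\<beta> > 0\<close> by simp
    then show ?thesis
      using that f' pq' \<open>\<beta> > 0\<close> by simp
  qed
  then show thesis
    using that pq' by blast
qed

lemma T_ab_2_covers_unit:
  fixes \<alpha> lo hi :: real
  assumes "0 \<le> lo" "lo < hi" "hi \<le> 1"
  obtains n where "T_ab_covers_unit \<alpha> 2 n lo hi"
proof -
  obtain n where "2 / (hi - lo) < (2::real)^n"
    using real_arch_pow[of "2::real"] by auto
  then have n: "2 \<le> 2^n * (hi - lo)"
    using assms by (simp add: field_simps)
  define c where "c = 2^n * lo + (2^n - 1) * \<alpha>"
  have "(T_ab \<alpha> 2 ^^ n) x = frac (c + 2^n * (x - lo))" if "x \<in> {lo<..<hi}" for x
    using that assms T_ab_2_iterate[where x=x and \<alpha>=\<alpha> and n=n] by (simp add: c_def algebra_simps)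
  moreover have "c \<le> of_int (\<lfloor>c\<rfloor> + 1)" "of_int (\<lfloor>c\<rfloor> + 1) + 1 \<le> c + 2^n * (hi - lo)"
    using n by linarith+
  ultimately show thesis
    using that[of n] assms unfolding T_ab_covers_unit_def by blast
qed

definition T_ab_branch :: "real \<Rightarrow> real \<Rightarrow> nat \<Rightarrow> real \<Rightarrow> real \<Rightarrow> real \<Rightarrow> bool" where
  "T_ab_branch \<alpha> \<beta> n p q u \<longleftrightarrow> p < q \<and> (\<forall>x\<in>{p<..<q}. (T_ab \<alpha> \<beta> ^^ n) x = u + \<beta>^n * (x - p))"

lemma T_ab_branch_length_le_1:
  assumes "T_ab_branch \<alpha> \<beta> n p q u" "0 \<le> p" "q \<le> 1"
  shows "\<beta>^n * (q - p) \<le> 1"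
proof -
  define g where "g x = u + \<beta>^n * (x - p)" for x
  have "g x \<in> {0..1}" if "x \<in> {p<..<q}" for x
    using that assms T_ab_iterate_in_unit[where \<alpha>=\<alpha> and \<beta>=\<beta> and n=n and x=x]
    unfolding T_ab_branch_def g_def by auto
  then have "g ` {p<..<q} \<subseteq> {0..1}"
    by blast
  moreover have "continuous_on (closure {p<..<q}) g"
    unfolding g_def by (intro continuous_intros)
  ultimately have "g ` closure {p<..<q} \<subseteq> {0..1}"
    by (intro image_closure_subset) auto
  moreover have "closure {p<..<q} = {p..q}"
    using assms(1) by (simp add: T_ab_branch_def)
  moreover have "p \<in> {p..q}" "q \<in> {p..q}"
    using assms(1) by (auto simp: T_ab_branch_def)
  ultimately have "g p \<in> {0..1}" "g q \<in> {0..1}"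
    by blast+
  then show ?thesis
    by (simp add: g_def)
qed

lemma T_ab_branch_Suc:
  assumes "T_ab_branch \<alpha> \<beta> n p q u" "0 \<le> p" "q \<le> 1"
  shows "\<forall>x\<in>{p<..<q}. (T_ab \<alpha> \<beta> ^^ Suc n) x = frac (\<beta> * u + \<alpha> + \<beta>^Suc n * (x - p))"
proof
  fix x assume x: "x \<in> {p<..<q}"
  have "(T_ab \<alpha> \<beta> ^^ n) x \<noteq> 1"
    using x assms T_ab_iterate_in_unit[where \<alpha>=\<alpha> and \<beta>=\<beta> and n=n and x=x] by auto
  moreover have "(T_ab \<alpha> \<beta> ^^ n) x = u + \<beta>^n * (x - p)"
    using assms(1) x unfolding T_ab_branch_def by blast
  ultimately have "(T_ab \<alpha> \<beta> ^^ Suc n) x = frac (\<beta> * (u + \<beta>^n * (x - p)) + \<alpha>)"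
    by (simp add: T_ab_eq_frac)
  then show "(T_ab \<alpha> \<beta> ^^ Suc n) x = frac (\<beta> * u + \<alpha> + \<beta>^Suc n * (x - p))"
    by (simp add: algebra_simps)
qed

lemma T_ab_branch_Suc_cases:
  assumes branch: "T_ab_branch \<alpha> \<beta> n p q u" and "0 \<le> p" "q \<le> 1" "\<beta> > 0"
  obtains (covers) "T_ab_covers_unit \<alpha> \<beta> (Suc n) p q"
    | (sub_branch) p' q' u' where "p \<le> p'" "q' \<le> q" "T_ab_branch \<alpha> \<beta> (Suc n) p' q' u'"
        "\<beta>^Suc n * (q - p) \<le> 2 * (\<beta>^Suc n * (q' - p'))"
proof -
  define c where "c = \<beta> * u + \<alpha>"
  define L where "L = \<beta>^Suc n"
  have "p < q" "L > 0"
    using branch \<open>\<beta> > 0\<close> by (auto simp: T_ab_branch_def L_def)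
  have frac_affine: "\<forall>x\<in>{p<..<q}. (T_ab \<alpha> \<beta> ^^ Suc n) x = frac (c + L * (x - p))"
    using T_ab_branch_Suc[OF branch] assms by (simp add: c_def L_def)
  have "c < c + L * (q - p)"
    using \<open>p < q\<close> \<open>L > 0\<close> by simp
  then show thesis
  proof (cases rule: interval_contains_cell_or_half_in_cell)
    case (cell k)
    then show thesis
      using covers \<open>p < q\<close> frac_affine unfolding T_ab_covers_unit_def L_def by blast
  next
    case (half y\<^sub>1 y\<^sub>2 k)
    obtain p' q' where "p \<le> p'" "p' < q'" "q' \<le> q" and len: "L * (q' - p') = y\<^sub>2 - y\<^sub>1"
      and affine: "\<forall>x\<in>{p'<..<q'}. (T_ab \<alpha> \<beta> ^^ Suc n) x = y\<^sub>1 - of_int k + L * (x - p')"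
      by (rule frac_affine_restrict_to_cell[OF \<open>L > 0\<close> frac_affine half(1-3,5)])
    then have "T_ab_branch \<alpha> \<beta> (Suc n) p' q' (y\<^sub>1 - of_int k)"
      by (simp add: T_ab_branch_def L_def)
    moreover have "L * (q - p) \<le> 2 * (L * (q' - p'))"
      using half len by simp
    ultimately show thesis
      using sub_branch \<open>p \<le> p'\<close> \<open>q' \<le> q\<close> by (simp add: L_def)
  qed
qed

lemma T_ab_branch_growth:
  assumes "\<beta> > 0" "0 \<le> lo" "lo < hi" "hi \<le> 1"
    and no_cover: "\<And>n p q. lo \<le> p \<Longrightarrow> q \<le> hi \<Longrightarrow> \<not> T_ab_covers_unit \<alpha> \<beta> n p q"
  obtains n p q u where "lo \<le> p" "q \<le> hi" "T_ab_branch \<alpha> \<beta> n p q u"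
    "(\<beta> / 2)^N * (hi - lo) \<le> \<beta>^n * (q - p)"
proof (induction N arbitrary: thesis)
  case 0
  have "T_ab_branch \<alpha> \<beta> 0 lo hi lo"
    using \<open>lo < hi\<close> by (simp add: T_ab_branch_def)
  then show thesis
    using "0"[of lo hi 0 lo] by simp
next
  case (Suc N)
  obtain n p q u where pq: "lo \<le> p" "q \<le> hi" and branch: "T_ab_branch \<alpha> \<beta> n p q u"
    and grown: "(\<beta> / 2)^N * (hi - lo) \<le> \<beta>^n * (q - p)"
    using Suc.IH by blast
  have unit: "0 \<le> p" "q \<le> 1"
    using pq assms by linarith+
  show thesis
  proof (cases rule: T_ab_branch_Suc_cases[OF branch unit \<open>\<beta> > 0\<close>, case_names covers sub_branch])
    case covers
    then show thesis
      using no_cover[OF pq] by blast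
  next
    case (sub_branch p' q' u')
    have "(\<beta> / 2)^Suc N * (hi - lo) = \<beta> / 2 * ((\<beta> / 2)^N * (hi - lo))"
      by simp
    also have "\<dots> \<le> \<beta> / 2 * (\<beta>^n * (q - p))"
      using grown \<open>\<beta> > 0\<close> by simp
    also have "\<dots> \<le> \<beta>^Suc n * (q' - p')"
      using sub_branch(4) by simp
    finally show thesis
      using Suc.prems[of p' q' "Suc n" u'] sub_branch pq by simp
  qed
qed

lemma T_ab_covers_unit_exists:
  assumes "\<beta> \<ge> 2" "0 \<le> lo" "lo < hi" "hi \<le> 1"
  obtains n p q where "lo \<le> p" "q \<le> hi" "T_ab_covers_unit \<alpha> \<beta> n p q"
proof (cases "\<beta> = 2")
  case True
  then show thesis
    using T_ab_2_covers_unit[OF assms(2-4)] that[of lo hi] by blast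
next
  case False
  then have "\<beta> / 2 > 1"
    using assms(1) by simp
  then obtain N where "1 / (hi - lo) < (\<beta> / 2)^N"
    using real_arch_pow by blast
  then have N: "1 < (\<beta> / 2)^N * (hi - lo)"
    using assms by (simp add: divide_less_eq)
  show thesis
  proof (cases "\<exists>n p q. lo \<le> p \<and> q \<le> hi \<and> T_ab_covers_unit \<alpha> \<beta> n p q")
    case True
    then show thesis
      using that by blast
  next
    case False
    then have no_cover: "\<And>n p q. lo \<le> p \<Longrightarrow> q \<le> hi \<Longrightarrow> \<not> T_ab_covers_unit \<alpha> \<beta> n p q"
      by blast
    have "\<beta> > 0"
      using assms(1) by simp
    obtain n p q u where "lo \<le> p" "q \<le> hi" and branch: "T_ab_branch \<alpha> \<beta> n p q u"
        and grown: "(\<beta> / 2)^N * (hi - lo) \<le> \<beta>^n * (q - p)"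
      by (rule T_ab_branch_growth[OF \<open>\<beta> > 0\<close> assms(2-4) no_cover])
    then have "\<beta>^n * (q - p) \<le> 1"
      using T_ab_branch_length_le_1[OF branch] assms by linarith
    then show thesis
      using N grown by linarith
  qed
qed

lemma unit_subset_closure_orbit:
  fixes T :: "real \<Rightarrow> real"
  assumes "\<And>r s. r \<in> \<rat> \<Longrightarrow> s \<in> \<rat> \<Longrightarrow> 0 \<le> r \<Longrightarrow> r < s \<Longrightarrow> s \<le> 1 \<Longrightarrow> \<exists>n. (T ^^ n) x \<in> {r<..<s}"
  shows "{0..1} \<subseteq> closure {(T ^^ n) x | n. True}"
proof
  fix y :: real assume "y \<in> {0..1}"
  show "y \<in> closure {(T ^^ n) x | n. True}"
    unfolding closure_approachable
  proof (intro allI impI)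
    fix \<epsilon> :: real assume "\<epsilon> > 0"
    have "max 0 (y - \<epsilon>) < min 1 (y + \<epsilon>)"
      using \<open>y \<in> {0..1}\<close> \<open>\<epsilon> > 0\<close> by auto
    then obtain r where r: "r \<in> \<rat>" "max 0 (y - \<epsilon>) < r" "r < min 1 (y + \<epsilon>)"
      using Rats_dense_in_real by blast
    then obtain s where s: "s \<in> \<rat>" "r < s" "s < min 1 (y + \<epsilon>)"
      using Rats_dense_in_real by blast
    have "0 \<le> r" "s \<le> 1"
      using r s by auto
    then obtain n where "(T ^^ n) x \<in> {r<..<s}"
      using assms r s by blast
    then have "dist ((T ^^ n) x) y < \<epsilon>"
      using r s by (auto simp: dist_real_def)
    then show "\<exists>z\<in>{(T ^^ n) x | n. True}. dist z y < \<epsilon>"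
      by blast
  qed
qed

definition hitting_set :: "(real \<Rightarrow> real) \<Rightarrow> real \<Rightarrow> real \<Rightarrow> real set" where
  "hitting_set T r s = {0..1} \<inter> \<Union>{{p<..<q} | p q. \<exists>n. (T ^^ n) ` {p<..<q} \<subseteq> {r<..<s}}"

lemma openin_hitting_set: "openin (top_of_set {0..1}) (hitting_set T r s)"
  unfolding hitting_set_def by (intro openin_open_Int open_Union) auto

lemma unit_subset_closure_hitting_set:
  fixes T :: "real \<Rightarrow> real"
  assumes hits: "\<And>lo hi. 0 \<le> lo \<Longrightarrow> lo < hi \<Longrightarrow> hi \<le> 1 \<Longrightarrow>
      \<exists>n p q. lo \<le> p \<and> p < q \<and> q \<le> hi \<and> (T ^^ n) ` {p<..<q} \<subseteq> {r<..<s}"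
  shows "{0..1} \<subseteq> closure (hitting_set T r s)"
proof
  fix x :: real assume "x \<in> {0..1}"
  show "x \<in> closure (hitting_set T r s)"
    unfolding closure_approachable
  proof (intro allI impI)
    fix \<epsilon> :: real assume "\<epsilon> > 0"
    have nbhd: "0 \<le> max 0 (x - \<epsilon>)" "max 0 (x - \<epsilon>) < min 1 (x + \<epsilon>)" "min 1 (x + \<epsilon>) \<le> 1"
      using \<open>x \<in> {0..1}\<close> \<open>\<epsilon> > 0\<close> by auto
    obtain n p q where pq: "max 0 (x - \<epsilon>) \<le> p" "p < q" "q \<le> min 1 (x + \<epsilon>)"
      and "(T ^^ n) ` {p<..<q} \<subseteq> {r<..<s}"
      using hits[OF nbhd] by blast
    then have "{p<..<q} \<in> {{p<..<q} | p q. \<exists>n. (T ^^ n) ` {p<..<q} \<subseteq> {r<..<s}}"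
      by blast
    moreover have "(p + q) / 2 \<in> {p<..<q}" "(p + q) / 2 \<in> {0..1}"
      using pq by auto
    ultimately have "(p + q) / 2 \<in> hitting_set T r s"
      unfolding hitting_set_def by blast
    moreover have "dist ((p + q) / 2) x < \<epsilon>"
      using pq by (auto simp: dist_real_def abs_less_iff field_simps)
    ultimately show "\<exists>y\<in>hitting_set T r s. dist y x < \<epsilon>"
      by blast
  qed
qed

lemma transitive_on_unit_if_hits_intervals:
  fixes T :: "real \<Rightarrow> real"
  assumes hits: "\<And>lo hi r s. 0 \<le> lo \<Longrightarrow> lo < hi \<Longrightarrow> hi \<le> 1 \<Longrightarrow> 0 \<le> r \<Longrightarrow> r < s \<Longrightarrow> s \<le> 1 \<Longrightarrow>
      \<exists>n p q. lo \<le> p \<and> p < q \<and> q \<le> hi \<and> (T ^^ n) ` {p<..<q} \<subseteq> {r<..<s}"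
  shows "transitive_on_unit T"
proof -
  define R where "R = {(r, s). r \<in> \<rat> \<and> s \<in> \<rat> \<and> 0 \<le> r \<and> r < s \<and> s \<le> (1::real)}"
  have "countable R"
    by (rule countable_subset[of _ "\<rat> \<times> \<rat>"]) (auto simp: R_def intro: countable_SIGMA countable_rat)
  have "{0..1} \<subseteq> closure (\<Inter>(r, s)\<in>R. hitting_set T r s)"
  proof (rule Baire)
    show "countable ((\<lambda>(r, s). hitting_set T r s) ` R)"
      using \<open>countable R\<close> by simp
    fix U assume "U \<in> (\<lambda>(r, s). hitting_set T r s) ` R"
    then obtain r s where U: "U = hitting_set T r s" and r_s: "0 \<le> r" "r < s" "s \<le> 1"
      unfolding R_def by auto
    have "{0..1} \<subseteq> closure (hitting_set T r s)"
      using r_s by (intro unit_subset_closure_hitting_set hits) auto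
    then show "openin (top_of_set {0..1}) U \<and> {0..1} \<subseteq> closure U"
      unfolding U using openin_hitting_set by blast
  qed simp
  then have "(\<Inter>(r, s)\<in>R. hitting_set T r s) \<noteq> {}"
    by auto
  then obtain x where x: "\<And>r s. (r, s) \<in> R \<Longrightarrow> x \<in> hitting_set T r s"
    by blast
  have "(0, 1) \<in> R"
    by (simp add: R_def)
  then have "x \<in> {0..1}"
    using x unfolding hitting_set_def by blast
  moreover have "{0..1} \<subseteq> closure {(T ^^ n) x | n. True}"
  proof (rule unit_subset_closure_orbit)
    fix r s :: real assume "r \<in> \<rat>" "s \<in> \<rat>" "0 \<le> r" "r < s" "s \<le> 1"
    then have "x \<in> hitting_set T r s"
      using x by (simp add: R_def)
    then show "\<exists>n. (T ^^ n) x \<in> {r<..<s}"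
      unfolding hitting_set_def by blast
  qed
  ultimately show ?thesis
    unfolding transitive_on_unit_def by blast
qed

theorem propositionA1:
  fixes \<alpha> \<beta> :: real
  assumes "0 \<le> \<alpha>" and "\<alpha> < 1" and "\<beta> \<ge> 2"
  shows "transitive_on_unit (T_ab \<alpha> \<beta>)"
proof (rule transitive_on_unit_if_hits_intervals)
  fix lo hi r s :: real
  assume lo_hi: "0 \<le> lo" "lo < hi" "hi \<le> 1" and r_s: "0 \<le> r" "r < s" "s \<le> 1"
  obtain n p q where "lo \<le> p" "q \<le> hi" and covers: "T_ab_covers_unit \<alpha> \<beta> n p q"
    by (rule T_ab_covers_unit_exists[OF \<open>\<beta> \<ge> 2\<close> lo_hi])
  moreover have "\<beta> > 0"
    using \<open>\<beta> \<ge> 2\<close> by simp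
  then obtain p' q' where "p \<le> p'" "p' < q'" "q' \<le> q" and "(T_ab \<alpha> \<beta> ^^ n) ` {p'<..<q'} \<subseteq> {r<..<s}"
    by (rule T_ab_covers_unit_hits[OF covers _ r_s])
  ultimately show "\<exists>n p q. lo \<le> p \<and> p < q \<and> q \<le> hi \<and> (T_ab \<alpha> \<beta> ^^ n) ` {p<..<q} \<subseteq> {r<..<s}"
    by (meson order_trans)
qed

end
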